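(* Let $k\ge 2$. If $G\in\mathcal{G}_k$ then $\kappa(G)\le\kappa(K_k)$. Moreover this bound is tight, since $K_k\in\mathcal{G}_k$.
   Context: For a graph $G=([n],E)$ and $w\in\mathbb{R}^E$, let $\mathrm{ip}(G,w)=\max_{x\in\{\pm1\}^n}\sum_{ij\in E}w_{ij}x_ix_j$ and $\mathrm{sdp}(G,w)=\max\sum_{ij\in E}w_{ij}u_i^Tu_j$, the maximum over unit vectors $u_1,\dots,u_n\in\mathbb{R}^n$; $\kappa(G)=\sup_{w\in\mathbb{R}^E}\mathrm{sdp}(G,w)/\mathrm{ip}(G,w)$. Let $E_n$ be the edge set of $K_n$ and $\mathrm{CUT}_n=\mathrm{conv}\{(x_ix_j)_{ij\in E_n}: x\in\{\pm1\}^n\}$. The support graph of a linear inequality $w^Tx\le\alpha$ on $\mathbb{R}^{E_n}$ is $H=(W,F)$ with $F=\{ij: w_{ij}\ne0\}$ and $W$ the set of nodes covered by $F$; it is supported by at most $k$ points if $|W|\le k$. $\mathcal{R}_k(K_n)$ is the polyhedron defined by all inequalities valid for $\mathrm{CUT}_n$ supported by at most $k$ points. For $G=([n],E)$, $\mathrm{CUT}(G)=\pi_E(\mathrm{CUT}_n)$, $\mathcal{R}_k(G)=\pi_E(\mathcal{R}_k(K_n))$ ($\pi_E$ the coordinate projection to $\mathbb{R}^E$), and $\mathcal{G}_k$ is the class of graphs $G$ with $\mathrm{CUT}(G)=\mathcal{R}_k(G)$. *)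

theory Defs
  imports "HOL-Analysis.Analysis" "HOL-Library.FuncSet"
begin

text \<open>Graphs G = ([n],E): vertices 0..n-1, edges stored as ordered pairs (i,j) with i < j < n.
  Vectors in R^E are functions on pairs; only their values on E matter.\<close>

definition Kedges :: "nat \<Rightarrow> (nat \<times> nat) set" where
  "Kedges n = {(i,j). i < j \<and> j < n}"

definition is_graph :: "nat \<Rightarrow> (nat \<times> nat) set \<Rightarrow> bool" where
  "is_graph n E \<longleftrightarrow> E \<subseteq> Kedges n"

definition signs :: "nat \<Rightarrow> (nat \<Rightarrow> int) set" where
  "signs n = {..<n} \<rightarrow>\<^sub>E {-1, 1}"

definition ip :: "nat \<Rightarrow> (nat \<times> nat) set \<Rightarrow> (nat \<times> nat \<Rightarrow> real) \<Rightarrow> real" where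
  "ip n E w = Max ((\<lambda>x. \<Sum>(i,j)\<in>E. w (i,j) * of_int (x i * x j)) ` signs n)"

definition unit_systems :: "nat \<Rightarrow> (nat \<Rightarrow> nat \<Rightarrow> real) set" where
  "unit_systems n = {u. \<forall>i<n. (\<Sum>k<n. (u i k)\<^sup>2) = 1}"

definition sdp :: "nat \<Rightarrow> (nat \<times> nat) set \<Rightarrow> (nat \<times> nat \<Rightarrow> real) \<Rightarrow> real" where
  "sdp n E w = Sup ((\<lambda>u. \<Sum>(i,j)\<in>E. w (i,j) * (\<Sum>k<n. u i k * u j k)) ` unit_systems n)"

definition kappa :: "nat \<Rightarrow> (nat \<times> nat) set \<Rightarrow> ereal" where
  "kappa n E = (SUP w. ereal (sdp n E w / ip n E w))"

definition cutvec :: "nat \<Rightarrow> (nat \<Rightarrow> int) \<Rightarrow> (nat \<times> nat \<Rightarrow> real)" where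
  "cutvec n x = (\<lambda>(i,j). if (i,j) \<in> Kedges n then of_int (x i * x j) else 0)"

definition CUTn :: "nat \<Rightarrow> (nat \<times> nat \<Rightarrow> real) set" where
  "CUTn n = {y. \<exists>l :: (nat \<Rightarrow> int) \<Rightarrow> real. (\<forall>x\<in>signs n. l x \<ge> 0) \<and> (\<Sum>x\<in>signs n. l x) = 1
               \<and> y = (\<lambda>e. \<Sum>x\<in>signs n. l x * cutvec n x e)}"

text \<open>Points of R^{E_n}: functions vanishing outside E_n.\<close>
definition space_on :: "(nat \<times> nat) set \<Rightarrow> (nat \<times> nat \<Rightarrow> real) set" where
  "space_on E = {y. \<forall>e. e \<notin> E \<longrightarrow> y e = 0}"

definition valid_ineq :: "nat \<Rightarrow> (nat \<times> nat \<Rightarrow> real) \<Rightarrow> real \<Rightarrow> bool" where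
  "valid_ineq n w \<alpha> \<longleftrightarrow> (\<forall>y\<in>CUTn n. (\<Sum>e\<in>Kedges n. w e * y e) \<le> \<alpha>)"

definition support_nodes :: "nat \<Rightarrow> (nat \<times> nat \<Rightarrow> real) \<Rightarrow> nat set" where
  "support_nodes n w = {v. \<exists>(i,j)\<in>Kedges n. w (i,j) \<noteq> 0 \<and> (v = i \<or> v = j)}"

definition Rk :: "nat \<Rightarrow> nat \<Rightarrow> (nat \<times> nat \<Rightarrow> real) set" where
  "Rk k n = {y \<in> space_on (Kedges n). \<forall>w \<alpha>. w \<in> space_on (Kedges n) \<and> valid_ineq n w \<alpha>
               \<and> card (support_nodes n w) \<le> k \<longrightarrow> (\<Sum>e\<in>Kedges n. w e * y e) \<le> \<alpha>}"

definition proj :: "(nat \<times> nat) set \<Rightarrow> (nat \<times> nat \<Rightarrow> real) \<Rightarrow> (nat \<times> nat \<Rightarrow> real)" where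
  "proj E y = (\<lambda>e. if e \<in> E then y e else 0)"

definition CUT :: "nat \<Rightarrow> (nat \<times> nat) set \<Rightarrow> (nat \<times> nat \<Rightarrow> real) set" where
  "CUT n E = proj E ` CUTn n"

definition RkG :: "nat \<Rightarrow> nat \<Rightarrow> (nat \<times> nat) set \<Rightarrow> (nat \<times> nat \<Rightarrow> real) set" where
  "RkG k n E = proj E ` Rk k n"

definition in_Gk :: "nat \<Rightarrow> nat \<Rightarrow> (nat \<times> nat) set \<Rightarrow> bool" where
  "in_Gk k n E \<longleftrightarrow> is_graph n E \<and> CUT n E = RkG k n E"

end

theory Submission
  imports Defs
begin

text \<open>Let \<open>K = \<kappa>(K\<^sub>k)\<close>, so that \<open>sdp(K\<^sub>k, b) \<le> K ip(K\<^sub>k, b)\<close> for every weighting \<open>b\<close>.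
  Given \<open>G \<in> \<G>\<^sub>k\<close>, a weighting \<open>w\<close> and unit vectors \<open>u\<^sub>i\<close>, consider the point \<open>z\<close> of
  \<open>\<real>\<^bsup>E\<^sub>n\<^esup>\<close> with \<open>z\<^sub>i\<^sub>j = \<langle>u\<^sub>i, u\<^sub>j\<rangle> / K\<close>. If \<open>a\<^sup>T y \<le> \<alpha>\<close> is valid for \<open>CUT\<^sub>n\<close> and supported
  by \<open>m \<le> k\<close> points, relabel its support as \<open>0, \<dots>, m - 1\<close> and replace the \<open>m\<close> vectors involved by
  vectors of \<open>\<real>\<^sup>k\<close> with the same Gram matrix (Gram-Schmidt); then \<open>K a\<^sup>T z\<close> is an SDP value
  of \<open>K\<^sub>k\<close>, hence at most \<open>K ip(K\<^sub>k, a) \<le> K \<alpha>\<close>. So \<open>z \<in> \<R>\<^sub>k(K\<^sub>n)\<close>, its projection lies in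
  \<open>CUT(G)\<close>, and therefore \<open>\<Sum> w\<^sub>i\<^sub>j \<langle>u\<^sub>i, u\<^sub>j\<rangle> = K w\<^sup>T z \<le> K ip(G, w)\<close>.
  Tightness: every inequality on \<open>K\<^sub>k\<close> is supported by at most \<open>k\<close> points, and \<open>CUT\<^sub>k\<close> is the
  intersection of its valid inequalities, as the nearest point of \<open>CUT\<^sub>k\<close> separates any other point.\<close>

section \<open>Inner products and Gram-Schmidt orthogonalisation\<close>

definition dot :: "nat \<Rightarrow> (nat \<Rightarrow> real) \<Rightarrow> (nat \<Rightarrow> real) \<Rightarrow> real" where
  "dot N f g = (\<Sum>t<N. f t * g t)"

lemma dot_commute: "dot N f g = dot N g f"
  by (simp add: dot_def mult.commute)

lemma dot_cong_left: "(\<And>t. t < N \<Longrightarrow> f t = f' t) \<Longrightarrow> dot N f g = dot N f' g"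
  by (simp add: dot_def)

lemma dot_diff_left: "dot N (\<lambda>t. f t - f' t) g = dot N f g - dot N f' g"
  by (simp add: dot_def left_diff_distrib sum_subtractf)

lemma dot_add_left: "dot N (\<lambda>t. f t + f' t) g = dot N f g + dot N f' g"
  by (simp add: dot_def distrib_right sum.distrib)

lemma dot_sum_left: "dot N (\<lambda>t. \<Sum>l\<in>A. c l * F l t) g = (\<Sum>l\<in>A. c l * dot N (F l) g)"
  by (simp add: dot_def sum_distrib_left sum_distrib_right sum.swap[of _ A] mult.assoc)

lemma dot_divide_left: "dot N (\<lambda>t. f t / a) g = dot N f g / a"
  by (simp add: dot_def sum_divide_distrib)

lemma dot_zero_left [simp]: "dot N (\<lambda>_. 0) g = 0"
  by (simp add: dot_def)

lemma dot_zero_right [simp]: "dot N f (\<lambda>_. 0) = 0"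
  by (simp add: dot_def)

lemma dot_self_nonneg: "0 \<le> dot N f f"
  by (simp add: dot_def sum_nonneg)

lemma dot_self_eq_0D: "dot N f f = 0 \<Longrightarrow> t < N \<Longrightarrow> f t = 0"
  unfolding dot_def by (subst (asm) sum_nonneg_eq_0_iff) auto

definition orthonormal_or_zero :: "nat \<Rightarrow> nat \<Rightarrow> (nat \<Rightarrow> nat \<Rightarrow> real) \<Rightarrow> bool" where
  "orthonormal_or_zero N m F \<longleftrightarrow>
     (\<forall>l<m. F l = (\<lambda>_. 0) \<or> dot N (F l) (F l) = 1) \<and>
     (\<forall>l<m. \<forall>l'<m. l \<noteq> l' \<longrightarrow> dot N (F l) (F l') = 0)"

lemma dot_combination_orthonormal_or_zero:
  assumes F: "orthonormal_or_zero N m F" and "j < m"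
  shows "dot N (\<lambda>t. \<Sum>l<m. c l * F l t) (F j) = c j * dot N (F j) (F j)"
proof -
  have "(\<Sum>l<m. c l * dot N (F l) (F j)) = (\<Sum>l<m. if l = j then c j * dot N (F j) (F j) else 0)"
    by (rule sum.cong) (use F \<open>j < m\<close> in \<open>auto simp: orthonormal_or_zero_def\<close>)
  then show ?thesis
    using \<open>j < m\<close> by (simp add: dot_sum_left)
qed

lemma dot_orthogonal_residual:
  assumes F: "orthonormal_or_zero N m F" and "j < m"
  shows "dot N (\<lambda>t. x t - (\<Sum>l<m. dot N x (F l) * F l t)) (F j) = 0"
  using F \<open>j < m\<close> unfolding dot_diff_left dot_combination_orthonormal_or_zero[OF assms]
  by (auto simp: orthonormal_or_zero_def)

lemma gram_schmidt_step:
  fixes x :: "nat \<Rightarrow> real"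
  assumes F: "orthonormal_or_zero N m F"
  obtains f where "orthonormal_or_zero N (Suc m) (F(m := f))"
    and "\<forall>t<N. x t = (\<Sum>l<Suc m. dot N x ((F(m := f)) l) * (F(m := f)) l t)"
proof
  define r where "r = (\<lambda>t. x t - (\<Sum>l<m. dot N x (F l) * F l t))"
  define d where "d = dot N r r"
  define f where "f = (if d = 0 then (\<lambda>_. 0) else (\<lambda>t. r t / sqrt d))"
  have "d \<ge> 0"
    unfolding d_def by (rule dot_self_nonneg)
  have f_perp: "dot N f (F j) = 0" if "j < m" for j
    using dot_orthogonal_residual[OF F that, of x] by (simp add: f_def r_def dot_divide_left)
  have perp_f: "dot N (F j) f = 0" if "j < m" for j
    using f_perp[OF that] by (simp add: dot_commute)
  have rf: "dot N r f = sqrt d" if "d \<noteq> 0"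
  proof -
    have "dot N r f = dot N f r"
      by (rule dot_commute)
    also have "\<dots> = d / sqrt d"
      using that by (simp add: f_def dot_divide_left d_def)
    finally show ?thesis
      using \<open>d \<ge> 0\<close> by (simp add: real_div_sqrt)
  qed
  have f_unit: "f = (\<lambda>_. 0) \<or> dot N f f = 1"
  proof (cases "d = 0")
    case False
    then have "dot N f f = dot N r f / sqrt d"
      by (simp add: f_def dot_divide_left)
    then show ?thesis
      using rf False \<open>d \<ge> 0\<close> by simp
  qed (simp add: f_def)
  show "orthonormal_or_zero N (Suc m) (F(m := f))"
    using F f_unit f_perp perp_f unfolding orthonormal_or_zero_def by (auto simp: less_Suc_eq)
  have "dot N x f * f t = r t" if "t < N" for t
  proof (cases "d = 0")
    case True
    then show ?thesis
      using dot_self_eq_0D[of N r t] \<open>t < N\<close> by (simp add: f_def d_def)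
  next
    case False
    have "dot N x f = dot N (\<lambda>t. r t + (\<Sum>l<m. dot N x (F l) * F l t)) f"
      by (simp add: r_def)
    also have "\<dots> = dot N r f + (\<Sum>l<m. dot N x (F l) * dot N (F l) f)"
      by (simp only: dot_add_left dot_sum_left)
    also have "\<dots> = sqrt d"
      using rf[OF False] perp_f by simp
    finally show ?thesis
      using False \<open>d \<ge> 0\<close> by (simp add: f_def)
  qed
  then show "\<forall>t<N. x t = (\<Sum>l<Suc m. dot N x ((F(m := f)) l) * (F(m := f)) l t)"
    by (simp add: r_def)
qed

lemma gram_schmidt:
  "\<exists>F. orthonormal_or_zero N m F \<and> (\<forall>p<m. \<forall>t<N. U p t = (\<Sum>l<m. dot N (U p) (F l) * F l t))"
proof (induction m)
  case 0
  then show ?case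
    by (simp add: orthonormal_or_zero_def)
next
  case (Suc m)
  then obtain F where F: "orthonormal_or_zero N m F"
    and U: "\<forall>p<m. \<forall>t<N. U p t = (\<Sum>l<m. dot N (U p) (F l) * F l t)"
    by blast
  obtain f where F': "orthonormal_or_zero N (Suc m) (F(m := f))"
    and Um: "\<forall>t<N. U m t = (\<Sum>l<Suc m. dot N (U m) ((F(m := f)) l) * (F(m := f)) l t)"
    using gram_schmidt_step[OF F] .
  have perp_f: "dot N (F l) f = 0" if "l < m" for l
    using F' that unfolding orthonormal_or_zero_def by (metis fun_upd_other fun_upd_same less_SucI lessI less_irrefl)
  have "U p t = (\<Sum>l<Suc m. dot N (U p) ((F(m := f)) l) * (F(m := f)) l t)" if "p < m" "t < N" for p t
  proof -
    have "dot N (U p) f = (\<Sum>l<m. dot N (U p) (F l) * dot N (F l) f)"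
      using U that(1) by (subst dot_cong_left[of N "U p"]) (auto simp: dot_sum_left)
    also have "\<dots> = 0"
      using perp_f by simp
    finally show ?thesis
      using U that by simp
  qed
  then have "\<forall>p<Suc m. \<forall>t<N. U p t = (\<Sum>l<Suc m. dot N (U p) ((F(m := f)) l) * (F(m := f)) l t)"
    using Um by (auto simp: less_Suc_eq)
  then show ?case
    using F' by blast
qed

lemma gram_matrix_in_dimension:
  fixes U :: "nat \<Rightarrow> nat \<Rightarrow> real"
  obtains V where "\<And>p l. m \<le> l \<Longrightarrow> V p l = 0"
    and "\<And>p q. p < m \<Longrightarrow> q < m \<Longrightarrow> dot m (V p) (V q) = dot N (U p) (U q)"
proof -
  obtain F where U: "\<forall>p<m. \<forall>t<N. U p t = (\<Sum>l<m. dot N (U p) (F l) * F l t)"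
    using gram_schmidt by blast
  define V where "V p l = (if l < m then dot N (U p) (F l) else 0)" for p l
  have "dot m (V p) (V q) = dot N (U p) (U q)" if "p < m" "q < m" for p q
  proof -
    have "dot N (U p) (U q) = dot N (\<lambda>t. \<Sum>l<m. dot N (U p) (F l) * F l t) (U q)"
      using U that(1) by (intro dot_cong_left) auto
    also have "\<dots> = (\<Sum>l<m. dot N (U p) (F l) * dot N (U q) (F l))"
      by (simp add: dot_sum_left dot_commute[of N "U q"])
    finally show ?thesis
      by (simp add: dot_def V_def)
  qed
  then show ?thesis
    using that[of V] by (simp add: V_def)
qed

section \<open>Cut values\<close>

lemma finite_Kedges [simp]: "finite (Kedges n)"
proof -
  have "Kedges n \<subseteq> {..<n} \<times> {..<n}"
    by (auto simp: Kedges_def)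
  then show ?thesis
    by (rule finite_subset) auto
qed

lemma Kedges_mono: "m \<le> k \<Longrightarrow> Kedges m \<subseteq> Kedges k"
  by (auto simp: Kedges_def)

lemma Kedges_nonempty: "2 \<le> k \<Longrightarrow> Kedges k \<noteq> {}"
proof -
  assume "2 \<le> k"
  then have "(0, 1) \<in> Kedges k"
    by (simp add: Kedges_def)
  then show ?thesis
    by blast
qed

lemma finite_signs [simp]: "finite (signs n)"
  by (simp add: signs_def finite_PiE)

lemma signs_nonempty [simp]: "signs n \<noteq> {}"
  by (auto simp: signs_def PiE_eq_empty_iff)

lemma signs_cases: "x \<in> signs n \<Longrightarrow> i < n \<Longrightarrow> x i = 1 \<or> x i = -1"
  by (auto simp: signs_def)

lemma abs_signs_product: "x \<in> signs n \<Longrightarrow> i < n \<Longrightarrow> j < n \<Longrightarrow> \<bar>x i * x j\<bar> = 1"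
  using signs_cases[of x n i] signs_cases[of x n j] by auto

lemma signs_flip: "x \<in> signs n \<Longrightarrow> i < n \<Longrightarrow> x(i := - x i) \<in> signs n"
  using signs_cases[of x n i] by (auto simp: signs_def PiE_def extensional_def Pi_iff)

definition cut_value :: "(nat \<times> nat) set \<Rightarrow> (nat \<times> nat \<Rightarrow> real) \<Rightarrow> (nat \<Rightarrow> int) \<Rightarrow> real" where
  "cut_value E w x = (\<Sum>(i,j)\<in>E. w (i,j) * of_int (x i * x j))"

lemma ip_eq_Max: "ip n E w = Max (cut_value E w ` signs n)"
  unfolding ip_def cut_value_def ..

lemma cut_value_le_ip: "x \<in> signs n \<Longrightarrow> cut_value E w x \<le> ip n E w"
  unfolding ip_eq_Max by (rule Max_ge) auto

lemma ip_attained: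
  obtains x where "x \<in> signs n" "ip n E w = cut_value E w x"
proof -
  have "ip n E w \<in> cut_value E w ` signs n"
    unfolding ip_eq_Max by (rule Max_in) auto
  then show ?thesis
    using that by blast
qed

lemma ip_leI: "(\<And>x. x \<in> signs n \<Longrightarrow> cut_value E w x \<le> c) \<Longrightarrow> ip n E w \<le> c"
  by (metis ip_attained)

lemma cut_value_add_scaled:
  "cut_value E (\<lambda>e. b e + t * c e) x = cut_value E b x + t * cut_value E c x"
  by (simp add: cut_value_def algebra_simps sum.distrib sum_distrib_left case_prod_unfold)

lemma sum_signs_product_eq_0:
  assumes "i < n" "j \<noteq> i"
  shows "(\<Sum>x\<in>signs n. of_int (x i * x j) :: real) = 0"
proof -
  have "(\<Sum>x\<in>signs n. of_int (x i * x j) :: real) = (\<Sum>x\<in>signs n. of_int ((x(i := - x i)) i * (x(i := - x i)) j))"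
    by (rule sum.reindex_bij_witness[of _ "\<lambda>x. x(i := - x i)" "\<lambda>x. x(i := - x i)"])
      (auto simp: signs_flip assms)
  also have "\<dots> = - (\<Sum>x\<in>signs n. of_int (x i * x j))"
    using assms by (simp add: sum_negf[symmetric])
  finally show ?thesis
    by simp
qed

text \<open>The cut values of any weighting average to zero over all sign vectors.\<close>

lemma ip_nonneg:
  assumes "E \<subseteq> Kedges n"
  shows "0 \<le> ip n E w"
proof -
  have "(\<Sum>x\<in>signs n. cut_value E w x) = (\<Sum>(i,j)\<in>E. w (i,j) * (\<Sum>x\<in>signs n. of_int (x i * x j)))"
    unfolding cut_value_def by (subst sum.swap) (simp add: case_prod_unfold sum_distrib_left)
  also have "\<dots> = 0"
    using assms sum_signs_product_eq_0 by (intro sum.neutral) (auto simp: Kedges_def)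
  finally have "(\<Sum>x\<in>signs n. cut_value E w x) = 0" .
  moreover have "(\<Sum>x\<in>signs n. cut_value E w x) \<le> (\<Sum>x\<in>signs n. ip n E w)"
    by (intro sum_mono cut_value_le_ip)
  ultimately show ?thesis
    by (simp add: zero_le_mult_iff card_gt_0_iff)
qed

lemma ip_perturbed_towards_maximiser:
  assumes E: "E \<subseteq> Kedges n" and x: "x \<in> signs n" "ip n E b = cut_value E b x" and "0 \<le> t"
  defines "c \<equiv> \<lambda>e. of_int (x (fst e) * x (snd e)) :: real"
  shows "ip n E (\<lambda>e. b e + t * c e) = ip n E b + t * card E"
proof (rule antisym)
  have ij: "i < n" "j < n" if "(i,j) \<in> E" for i j
    using that E by (auto simp: Kedges_def)
  have "cut_value E c y \<le> card E" if y: "y \<in> signs n" for y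
  proof -
    have "cut_value E c y \<le> (\<Sum>(i,j)\<in>E. 1)"
      unfolding cut_value_def
    proof (intro sum_mono, clarify)
      fix i j assume "(i,j) \<in> E"
      then have "\<bar>x i * x j * (y i * y j)\<bar> = 1"
        using abs_signs_product[OF x(1)] abs_signs_product[OF y] ij by (simp add: abs_mult)
      then show "c (i,j) * of_int (y i * y j) \<le> 1"
        by (simp add: c_def flip: of_int_mult)
    qed
    then show ?thesis
      by simp
  qed
  then show "ip n E (\<lambda>e. b e + t * c e) \<le> ip n E b + t * card E"
    using cut_value_le_ip \<open>0 \<le> t\<close>
    by (intro ip_leI) (simp add: cut_value_add_scaled add_mono mult_left_mono)
  have "cut_value E c x = (\<Sum>(i,j)\<in>E. 1)"
    unfolding cut_value_def
  proof (intro sum.cong refl, clarify)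
    fix i j assume "(i,j) \<in> E"
    then have "\<bar>x i * x j\<bar> = 1"
      using abs_signs_product[OF x(1)] ij by simp
    then have "x i * x j * (x i * x j) = 1"
      by (metis abs_mult_self_eq mult_1)
    then show "c (i,j) * of_int (x i * x j) = 1"
      by (metis c_def fst_conv snd_conv of_int_1 of_int_mult)
  qed
  then show "ip n E b + t * card E \<le> ip n E (\<lambda>e. b e + t * c e)"
    using cut_value_le_ip[OF x(1), of E "\<lambda>e. b e + t * c e"] x(2)
    by (simp add: cut_value_add_scaled)
qed

section \<open>SDP values and \<open>\<kappa>\<close>\<close>

lemma unit_systems_iff: "u \<in> unit_systems n \<longleftrightarrow> (\<forall>i<n. dot n (u i) (u i) = 1)"
  by (simp add: unit_systems_def dot_def power2_eq_square)

lemma first_basis_vector_unit_system: "(\<lambda>_ l. if l = 0 then 1 else 0) \<in> unit_systems n"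
  by (auto simp: unit_systems_iff dot_def if_distrib[of "\<lambda>y. y * _"] cong: if_cong)

lemma abs_dot_unit_system_le_1:
  assumes u: "u \<in> unit_systems n" and "i < n" "j < n"
  shows "\<bar>dot n (u i) (u j)\<bar> \<le> 1"
proof -
  have "\<bar>dot n (u i) (u j)\<bar> \<le> (\<Sum>t<n. ((u i t)\<^sup>2 + (u j t)\<^sup>2) / 2)"
    unfolding dot_def
  proof (rule order_trans[OF sum_abs sum_mono])
    fix t
    have "0 \<le> (\<bar>u i t\<bar> - \<bar>u j t\<bar>)\<^sup>2"
      by simp
    then show "\<bar>u i t * u j t\<bar> \<le> ((u i t)\<^sup>2 + (u j t)\<^sup>2) / 2"
      by (simp add: power2_eq_square abs_mult algebra_simps)
  qed
  also have "\<dots> = (dot n (u i) (u i) + dot n (u j) (u j)) / 2"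
    by (simp add: dot_def power2_eq_square sum_divide_distrib sum.distrib add_divide_distrib)
  finally show ?thesis
    using u assms by (simp add: unit_systems_iff)
qed

definition sdp_value :: "nat \<Rightarrow> (nat \<times> nat) set \<Rightarrow> (nat \<times> nat \<Rightarrow> real) \<Rightarrow> (nat \<Rightarrow> nat \<Rightarrow> real) \<Rightarrow> real" where
  "sdp_value n E w u = (\<Sum>(i,j)\<in>E. w (i,j) * dot n (u i) (u j))"

lemma sdp_eq_Sup: "sdp n E w = Sup (sdp_value n E w ` unit_systems n)"
  unfolding sdp_def sdp_value_def dot_def ..

lemma sdp_value_add_scaled:
  "sdp_value n E (\<lambda>e. b e + t * c e) u = sdp_value n E b u + t * sdp_value n E c u"
  by (simp add: sdp_value_def algebra_simps sum.distrib sum_distrib_left case_prod_unfold)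

lemma abs_sdp_value_le:
  assumes "E \<subseteq> Kedges n" "u \<in> unit_systems n"
  shows "\<bar>sdp_value n E w u\<bar> \<le> (\<Sum>e\<in>E. \<bar>w e\<bar>)"
proof -
  have "\<bar>sdp_value n E w u\<bar> \<le> (\<Sum>(i,j)\<in>E. \<bar>w (i,j) * dot n (u i) (u j)\<bar>)"
    unfolding sdp_value_def case_prod_unfold by (rule sum_abs)
  also have "\<dots> \<le> (\<Sum>(i,j)\<in>E. \<bar>w (i,j)\<bar>)"
  proof (rule sum_mono, clarify)
    fix i j assume "(i,j) \<in> E"
    then have "\<bar>dot n (u i) (u j)\<bar> \<le> 1"
      using assms by (intro abs_dot_unit_system_le_1) (auto simp: Kedges_def)
    then show "\<bar>w (i,j) * dot n (u i) (u j)\<bar> \<le> \<bar>w (i,j)\<bar>"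
      by (simp add: abs_mult mult_left_le)
  qed
  finally show ?thesis
    by (simp add: case_prod_unfold)
qed

lemma sdp_value_le_sdp:
  assumes "E \<subseteq> Kedges n" "u \<in> unit_systems n"
  shows "sdp_value n E w u \<le> sdp n E w"
proof -
  have "bdd_above (sdp_value n E w ` unit_systems n)"
    using abs_sdp_value_le[OF assms(1)] by (intro bdd_aboveI) (force simp: abs_le_iff)
  then show ?thesis
    unfolding sdp_eq_Sup using assms(2) by (intro cSup_upper) auto
qed

lemma sdp_leI: "(\<And>u. u \<in> unit_systems n \<Longrightarrow> sdp_value n E w u \<le> c) \<Longrightarrow> sdp n E w \<le> c"
  unfolding sdp_eq_Sup using first_basis_vector_unit_system by (intro cSup_least) auto

lemma sdp_zero: "sdp n E (\<lambda>_. 0) = 0"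
proof -
  have "sdp_value n E (\<lambda>_. 0) ` unit_systems n = {0}"
    using first_basis_vector_unit_system by (auto simp: sdp_value_def)
  then show ?thesis
    by (simp add: sdp_eq_Sup)
qed

lemma ratio_le_kappa: "ereal (sdp n E w / ip n E w) \<le> kappa n E"
  unfolding kappa_def by (rule SUP_upper) simp

lemma kappa_nonneg: "0 \<le> kappa n E"
  using ratio_le_kappa[of n E "\<lambda>_. 0"] by (simp add: sdp_zero zero_ereal_def)

lemma kappa_le_ereal:
  assumes "E \<subseteq> Kedges n" "0 \<le> c" and sdp_le: "\<And>w. sdp n E w \<le> c * ip n E w"
  shows "kappa n E \<le> ereal c"
  unfolding kappa_def
proof (rule SUP_least)
  fix w
  have "0 \<le> ip n E w"
    using assms(1) by (rule ip_nonneg)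
  then have "sdp n E w / ip n E w \<le> c"
    using sdp_le[of w] \<open>0 \<le> c\<close> by (cases "ip n E w = 0") (simp_all add: divide_le_eq mult.commute)
  then show "ereal (sdp n E w / ip n E w) \<le> ereal c"
    by simp
qed

text \<open>When \<open>ip n E b = 0\<close> the quotient in \<open>kappa\<close> is \<open>0\<close> whatever \<open>sdp n E b\<close> is; the bound
  below is recovered by moving \<open>b\<close> slightly towards a maximising cut, which makes \<open>ip\<close> positive.\<close>

lemma sdp_le_kappa_ip:
  assumes E: "E \<subseteq> Kedges n" "E \<noteq> {}" and K: "kappa n E = ereal K"
  shows "sdp n E b \<le> K * ip n E b"
proof (rule sdp_leI)
  fix u assume u: "u \<in> unit_systems n"
  have ratio: "sdp n E w / ip n E w \<le> K" for w
    using ratio_le_kappa[of n E w] K by simp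
  have "0 \<le> K"
    using kappa_nonneg[of n E] K by simp
  obtain x where x: "x \<in> signs n" "ip n E b = cut_value E b x"
    using ip_attained by blast
  define c where "c e = (of_int (x (fst e) * x (snd e)) :: real)" for e
  define M where "M = real (card E)"
  have "M > 0"
    using E finite_subset[OF E(1)] by (simp add: M_def card_gt_0_iff)
  have close: "sdp_value n E b u \<le> K * ip n E b + t * ((K + 1) * M)" if "t > 0" for t
  proof -
    define bt where "bt e = b e + t * c e" for e
    have ip_bt: "ip n E bt = ip n E b + t * M"
      unfolding bt_def c_def M_def using ip_perturbed_towards_maximiser[OF E(1) x] \<open>t > 0\<close> by simp
    then have "ip n E bt > 0"
      using ip_nonneg[OF E(1), of b] \<open>t > 0\<close> \<open>M > 0\<close> by (simp add: add_nonneg_pos)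
    then have sdp_bt: "sdp n E bt \<le> K * (ip n E b + t * M)"
      using ratio[of bt] ip_bt by (simp add: divide_le_eq mult.commute)
    have "(\<Sum>e\<in>E. \<bar>c e\<bar>) = (\<Sum>e\<in>E. 1)"
    proof (rule sum.cong[OF refl])
      fix e assume "e \<in> E"
      then have "fst e < n" "snd e < n"
        using E(1) by (auto simp: Kedges_def)
      then show "\<bar>c e\<bar> = 1"
        using abs_signs_product[OF x(1)] unfolding c_def by (metis of_int_1 of_int_abs)
    qed
    then have "\<bar>sdp_value n E c u\<bar> \<le> M"
      using abs_sdp_value_le[OF E(1) u, of c] by (simp add: M_def)
    then have "sdp_value n E b u \<le> sdp_value n E bt u + t * M"
      using \<open>t > 0\<close> unfolding bt_def sdp_value_add_scaled
      by (smt (verit) abs_le_iff mult_left_mono mult_minus_right)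
    also have "sdp_value n E bt u \<le> sdp n E bt"
      using E(1) u by (rule sdp_value_le_sdp)
    finally show ?thesis
      using sdp_bt by (simp add: algebra_simps)
  qed
  show "sdp_value n E b u \<le> K * ip n E b"
  proof (rule field_le_epsilon)
    fix e :: real assume "e > 0"
    then show "sdp_value n E b u \<le> K * ip n E b + e"
      using close[of "e / ((K + 1) * M)"] \<open>0 \<le> K\<close> \<open>M > 0\<close> by simp
  qed
qed

section \<open>The cut polytope\<close>

lemma cutvec_in_CUTn:
  assumes "x \<in> signs n"
  shows "cutvec n x \<in> CUTn n"
proof -
  have "(\<Sum>y\<in>signs n. (if y = x then 1 else 0) * cutvec n y e) = cutvec n x e" for e
    using assms by (simp add: if_distrib[of "\<lambda>c. c * _"] cong: if_cong)
  then show ?thesis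
    unfolding CUTn_def using assms
    by (intro CollectI exI[of _ "\<lambda>y. if y = x then 1 else 0"]) auto
qed

lemma CUTn_le_of_vertices:
  assumes vert: "\<And>x. x \<in> signs n \<Longrightarrow> (\<Sum>e\<in>D. w e * cutvec n x e) \<le> \<alpha>" and y: "y \<in> CUTn n"
  shows "(\<Sum>e\<in>D. w e * y e) \<le> \<alpha>"
proof -
  obtain l where l0: "\<forall>x\<in>signs n. 0 \<le> l x" and l1: "(\<Sum>x\<in>signs n. l x) = 1"
    and yl: "y = (\<lambda>e. \<Sum>x\<in>signs n. l x * cutvec n x e)"
    using y unfolding CUTn_def by blast
  have "(\<Sum>e\<in>D. w e * y e) = (\<Sum>x\<in>signs n. l x * (\<Sum>e\<in>D. w e * cutvec n x e))"
    unfolding yl by (simp add: sum_distrib_left sum.swap[of _ D] algebra_simps)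
  also have "\<dots> \<le> (\<Sum>x\<in>signs n. l x * \<alpha>)"
    using l0 vert by (intro sum_mono mult_left_mono) auto
  also have "\<dots> = \<alpha>"
    using l1 by (simp flip: sum_distrib_right)
  finally show ?thesis .
qed

lemma CUTn_value_le_ip:
  assumes "E \<subseteq> Kedges n" "y \<in> CUTn n"
  shows "(\<Sum>e\<in>E. w e * y e) \<le> ip n E w"
proof (rule CUTn_le_of_vertices[OF _ assms(2)])
  fix x assume "x \<in> signs n"
  have "(\<Sum>e\<in>E. w e * cutvec n x e) = cut_value E w x"
    unfolding cut_value_def using assms(1) by (intro sum.cong) (auto simp: cutvec_def)
  then show "(\<Sum>e\<in>E. w e * cutvec n x e) \<le> ip n E w"
    using cut_value_le_ip[OF \<open>x \<in> signs n\<close>] by simp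
qed

lemma ip_le_of_valid_ineq: "valid_ineq n a \<alpha> \<Longrightarrow> ip n (Kedges n) a \<le> \<alpha>"
  unfolding valid_ineq_def using cutvec_in_CUTn
  by (intro ip_leI) (force simp: cut_value_def cutvec_def case_prod_unfold)

lemma support_nodes_subset: "support_nodes n w \<subseteq> {..<n}"
  by (auto simp: support_nodes_def Kedges_def)

lemma compact_standard_simplex:
  fixes P :: "'a set"
  assumes "finite P"
  shows "compact (Pi\<^sub>E UNIV (\<lambda>x. if x \<in> P then {0..1::real} else {0}) \<inter> {l. (\<Sum>x\<in>P. l x) = 1})"
proof -
  have "compactin (product_topology (\<lambda>_. euclidean) UNIV) (Pi\<^sub>E UNIV (\<lambda>x. if x \<in> P then {0..1::real} else {0}))"
    by (subst compactin_PiE) auto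
  moreover have "closed {l :: 'a \<Rightarrow> real. (\<Sum>x\<in>P. l x) = 1}"
    by (intro closed_Collect_eq continuous_intros continuous_on_product_coordinates)
  ultimately show ?thesis
    by (auto simp: euclidean_product_topology)
qed

lemma nonpos_if_le_small_multiples:
  fixes a C :: real
  assumes "0 \<le> C" and le: "\<And>t. 0 < t \<Longrightarrow> t \<le> 1 \<Longrightarrow> a \<le> t * C"
  shows "a \<le> 0"
proof (rule ccontr)
  assume "\<not> a \<le> 0"
  define t where "t = min 1 (a / (2 * (C + 1)))"
  have "0 < t" "t \<le> 1" "t \<le> a / (2 * (C + 1))"
    using \<open>\<not> a \<le> 0\<close> \<open>0 \<le> C\<close> by (simp_all add: t_def)
  then have "t * C \<le> a / (2 * (C + 1)) * C"
    using \<open>0 \<le> C\<close> by (intro mult_right_mono)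
  also have "\<dots> < a"
  proof -
    have "0 \<le> C * a"
      using \<open>\<not> a \<le> 0\<close> \<open>0 \<le> C\<close> by simp
    then have "0 < C * a + a * 2"
      using \<open>\<not> a \<le> 0\<close> by linarith
    then show ?thesis
      using \<open>0 \<le> C\<close> by (simp add: field_simps)
  qed
  finally show False
    using le[OF \<open>0 < t\<close> \<open>t \<le> 1\<close>] by simp
qed

text \<open>The nearest point \<open>c\<close> of the convex hull to \<open>y\<close> gives the separating inequality
  \<open>\<langle>y - c, z\<rangle> \<le> \<langle>y - c, c\<rangle>\<close>; its validity at the vertices is the first-order optimality condition
  along the segments from \<open>c\<close> to the vertices.\<close>

lemma separation_from_finite_convex_hull:
  fixes v :: "'p \<Rightarrow> 'e \<Rightarrow> real" and y :: "'e \<Rightarrow> real"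
  assumes P: "finite P" "P \<noteq> {}" and "finite D"
    and outside: "\<And>l. \<forall>x\<in>P. 0 \<le> l x \<Longrightarrow> (\<Sum>x\<in>P. l x) = 1 \<Longrightarrow> \<exists>e\<in>D. y e \<noteq> (\<Sum>x\<in>P. l x * v x e)"
  obtains w \<alpha> where "\<And>x. x \<in> P \<Longrightarrow> (\<Sum>e\<in>D. w e * v x e) \<le> \<alpha>" and "\<alpha> < (\<Sum>e\<in>D. w e * y e)"
proof -
  define \<Delta> where "\<Delta> = Pi\<^sub>E UNIV (\<lambda>x. if x \<in> P then {0..1::real} else {0}) \<inter> {l. (\<Sum>x\<in>P. l x) = 1}"
  define pt where "pt l e = (\<Sum>x\<in>P. l x * v x e)" for l e
  define h where "h l = (\<Sum>e\<in>D. (y e - pt l e)\<^sup>2)" for l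
  obtain x0 where "x0 \<in> P"
    using P by blast
  then have "(\<lambda>x. if x = x0 then 1 else 0) \<in> \<Delta>"
    using P by (auto simp: \<Delta>_def split: if_split_asm)
  moreover have "continuous_on \<Delta> h"
    unfolding h_def pt_def
    by (intro continuous_intros) (auto intro: continuous_on_subset[OF continuous_on_product_coordinates])
  ultimately obtain ls where ls: "ls \<in> \<Delta>" and ls_min: "\<And>l. l \<in> \<Delta> \<Longrightarrow> h ls \<le> h l"
    using continuous_attains_inf[OF compact_standard_simplex[OF P(1), folded \<Delta>_def]] by blast
  have ls_range: "0 \<le> ls x \<and> ls x \<le> 1" if "x \<in> P" for x
    using ls that by (auto simp: \<Delta>_def PiE_UNIV_domain Pi_iff dest!: spec[of _ x])
  define w where "w e = y e - pt ls e" for e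
  define \<alpha> where "\<alpha> = (\<Sum>e\<in>D. w e * pt ls e)"
  show ?thesis
  proof
    fix x1 assume "x1 \<in> P"
    define d where "d e = v x1 e - pt ls e" for e
    have first_order: "2 * (\<Sum>e\<in>D. w e * d e) \<le> t * (\<Sum>e\<in>D. (d e)\<^sup>2)" if t: "0 < t" "t \<le> 1" for t
    proof -
      define lt where "lt x = (1 - t) * ls x + t * (if x = x1 then 1 else 0)" for x
      have "0 \<le> lt x \<and> lt x \<le> 1" if "x \<in> P" for x
        using ls_range[OF that] t unfolding lt_def
        by (intro conjI add_nonneg_nonneg mult_nonneg_nonneg convex_bound_le) auto
      moreover have "lt x = 0" if "x \<notin> P" for x
        using ls that \<open>x1 \<in> P\<close> by (auto simp: \<Delta>_def PiE_UNIV_domain Pi_iff lt_def dest!: spec[of _ x])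
      moreover have "(\<Sum>x\<in>P. lt x) = 1"
        using ls \<open>x1 \<in> P\<close> P(1) by (simp add: \<Delta>_def lt_def sum.distrib flip: sum_distrib_left)
      ultimately have "lt \<in> \<Delta>"
        by (auto simp: \<Delta>_def PiE_UNIV_domain Pi_iff)
      moreover have "pt lt e = pt ls e + t * d e" for e
      proof -
        have "pt lt e = (\<Sum>x\<in>P. (1 - t) * (ls x * v x e) + (if x = x1 then t * v x e else 0))"
          unfolding pt_def lt_def by (intro sum.cong) (auto simp: algebra_simps)
        also have "\<dots> = (1 - t) * pt ls e + t * v x1 e"
          using \<open>x1 \<in> P\<close> P(1) by (simp add: pt_def sum.distrib sum_distrib_left)
        finally show ?thesis
          by (simp add: d_def algebra_simps)
      qed
      then have "h lt = h ls - 2 * t * (\<Sum>e\<in>D. w e * d e) + t\<^sup>2 * (\<Sum>e\<in>D. (d e)\<^sup>2)"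
        by (simp add: h_def w_def power2_eq_square algebra_simps sum.distrib sum_subtractf sum_distrib_left)
      ultimately have "t * (2 * (\<Sum>e\<in>D. w e * d e)) \<le> t * (t * (\<Sum>e\<in>D. (d e)\<^sup>2))"
        using ls_min[of lt] by (simp add: power2_eq_square algebra_simps)
      then show ?thesis
        using t by simp
    qed
    have "2 * (\<Sum>e\<in>D. w e * d e) \<le> 0"
      by (rule nonpos_if_le_small_multiples[OF _ first_order]) (simp_all add: sum_nonneg)
    then show "(\<Sum>e\<in>D. w e * v x1 e) \<le> \<alpha>"
      by (simp add: d_def \<alpha>_def algebra_simps sum_subtractf)
  next
    obtain e0 where "e0 \<in> D" "w e0 \<noteq> 0"
      using outside[of ls] ls ls_range by (auto simp: \<Delta>_def w_def pt_def)
    then have "0 < (\<Sum>e\<in>D. (w e)\<^sup>2)"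
      using \<open>finite D\<close> by (intro sum_pos2[of D e0]) auto
    also have "(\<Sum>e\<in>D. (w e)\<^sup>2) = (\<Sum>e\<in>D. w e * y e) - \<alpha>"
      unfolding \<alpha>_def sum_subtractf[symmetric] by (simp add: w_def power2_eq_square algebra_simps)
    finally show "\<alpha> < (\<Sum>e\<in>D. w e * y e)"
      by simp
  qed
qed

lemma CUTn_subset_space_on: "CUTn n \<subseteq> space_on (Kedges n)"
  by (auto simp: CUTn_def space_on_def cutvec_def)

lemma CUTn_if_valid_ineqs_hold:
  assumes y: "y \<in> space_on (Kedges n)"
    and holds: "\<And>w \<alpha>. w \<in> space_on (Kedges n) \<Longrightarrow> valid_ineq n w \<alpha> \<Longrightarrow> (\<Sum>e\<in>Kedges n. w e * y e) \<le> \<alpha>"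
  shows "y \<in> CUTn n"
proof (rule ccontr)
  assume "y \<notin> CUTn n"
  have y0: "y e = 0" if "e \<notin> Kedges n" for e
    using y that unfolding space_on_def by blast
  have outside: "\<exists>e\<in>Kedges n. y e \<noteq> (\<Sum>x\<in>signs n. l x * cutvec n x e)"
    if "\<forall>x\<in>signs n. 0 \<le> l x" "(\<Sum>x\<in>signs n. l x) = 1" for l
  proof (rule ccontr)
    assume "\<not> ?thesis"
    then have "y e = (\<Sum>x\<in>signs n. l x * cutvec n x e)" for e
      using y0 by (cases "e \<in> Kedges n") (auto simp: cutvec_def case_prod_unfold)
    then have "y = (\<lambda>e. \<Sum>x\<in>signs n. l x * cutvec n x e)" ..
    then show False
      using that \<open>y \<notin> CUTn n\<close> by (auto simp: CUTn_def)
  qed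
  obtain w \<alpha> where vert: "\<And>x. x \<in> signs n \<Longrightarrow> (\<Sum>e\<in>Kedges n. w e * cutvec n x e) \<le> \<alpha>"
    and sep: "\<alpha> < (\<Sum>e\<in>Kedges n. w e * y e)"
    using separation_from_finite_convex_hull[OF finite_signs signs_nonempty finite_Kedges outside] by blast
  define w' where "w' e = (if e \<in> Kedges n then w e else 0)" for e
  have "w' \<in> space_on (Kedges n)"
    by (simp add: space_on_def w'_def)
  moreover have "valid_ineq n w' \<alpha>"
    unfolding valid_ineq_def using vert by (auto simp: w'_def intro: CUTn_le_of_vertices)
  ultimately have "(\<Sum>e\<in>Kedges n. w' e * y e) \<le> \<alpha>"
    by (rule holds)
  with sep show False
    by (simp add: w'_def)
qed

lemma Rk_self_eq_CUTn: "Rk n n = CUTn n"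
proof
  show "CUTn n \<subseteq> Rk n n"
    using CUTn_subset_space_on by (auto simp: Rk_def valid_ineq_def)
  have "card (support_nodes n w) \<le> n" for w
    using card_mono[OF _ support_nodes_subset] by fastforce
  then show "Rk n n \<subseteq> CUTn n"
    by (auto simp: Rk_def intro: CUTn_if_valid_ineqs_hold)
qed

lemma in_Gk_complete: "in_Gk n n (Kedges n)"
  by (simp add: in_Gk_def is_graph_def CUT_def RkG_def Rk_self_eq_CUTn)

section \<open>Inequalities supported by at most \<open>k\<close> points\<close>

definition relabel :: "nat \<Rightarrow> (nat \<Rightarrow> nat) \<Rightarrow> (nat \<times> nat \<Rightarrow> real) \<Rightarrow> nat \<times> nat \<Rightarrow> real" where
  "relabel m s a = (\<lambda>(p,q). if q < m then a (s p, s q) else 0)"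

context
  fixes n m k :: nat and s :: "nat \<Rightarrow> nat" and S :: "nat set" and a :: "nat \<times> nat \<Rightarrow> real"
  assumes s_bij: "bij_betw s {..<m} S" and s_mono: "strict_mono_on {..<m} s"
    and S_sub: "S \<subseteq> {..<n}" and m_le: "m \<le> k"
    and a_supp: "\<And>i j. (i,j) \<in> Kedges n \<Longrightarrow> a (i,j) \<noteq> 0 \<Longrightarrow> i \<in> S \<and> j \<in> S"
begin

lemma sum_Kedges_relabel:
  "(\<Sum>(i,j)\<in>Kedges n. a (i,j) * F i j) = (\<Sum>(p,q)\<in>Kedges k. relabel m s a (p,q) * F (s p) (s q))"
proof -
  have bij: "bij_betw (\<lambda>(p,q). (s p, s q)) (Kedges m) (Kedges n \<inter> S \<times> S)"
  proof (rule bij_betw_imageI)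
    show "inj_on (\<lambda>(p,q). (s p, s q)) (Kedges m)"
      using strict_mono_on_eq[OF s_mono] by (auto simp: inj_on_def Kedges_def)
    have "(s p, s q) \<in> Kedges n \<inter> S \<times> S" if "p < q" "q < m" for p q
      using that strict_mono_onD[OF s_mono] bij_betw_apply[OF s_bij] S_sub by (auto simp: Kedges_def)
    moreover have "(i,j) \<in> (\<lambda>(p,q). (s p, s q)) ` Kedges m" if ij: "(i,j) \<in> Kedges n \<inter> S \<times> S" for i j
    proof -
      obtain p q where "p < m" "q < m" "i = s p" "j = s q"
        using ij s_bij by (auto simp: bij_betw_def)
      then show ?thesis
        using ij strict_mono_on_less[OF s_mono] by (auto simp: Kedges_def)
    qed
    ultimately show "(\<lambda>(p,q). (s p, s q)) ` Kedges m = Kedges n \<inter> S \<times> S"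
      by (auto simp: Kedges_def)
  qed
  have "(\<Sum>(i,j)\<in>Kedges n. a (i,j) * F i j) = (\<Sum>(i,j)\<in>Kedges n \<inter> S \<times> S. a (i,j) * F i j)"
    using a_supp by (intro sum.mono_neutral_right) auto
  also have "\<dots> = (\<Sum>(p,q)\<in>Kedges m. a (s p, s q) * F (s p) (s q))"
    using sum.reindex_bij_betw[OF bij, of "\<lambda>(i,j). a (i,j) * F i j"] by (simp add: case_prod_unfold)
  also have "\<dots> = (\<Sum>(p,q)\<in>Kedges k. relabel m s a (p,q) * F (s p) (s q))"
    using Kedges_mono[OF m_le]
    by (intro sum.mono_neutral_cong_left finite_Kedges) (auto simp: relabel_def Kedges_def)
  finally show ?thesis .
qed

lemma ip_relabel_le: "ip k (Kedges k) (relabel m s a) \<le> ip n (Kedges n) a"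
proof (rule ip_leI)
  fix x' assume x': "x' \<in> signs k"
  define x where "x = restrict (\<lambda>i. if i \<in> S then x' (inv_into {..<m} s i) else 1) {..<n}"
  have x_s: "x (s p) = x' p" if "p < m" for p
    using that bij_betw_apply[OF s_bij] bij_betw_inv_into_left[OF s_bij] S_sub by (auto simp: x_def)
  have "x \<in> signs n"
  proof -
    have "inv_into {..<m} s i < k" if "i \<in> S" for i
      using that m_le bij_betw_inv_into[OF s_bij] bij_betw_apply by fastforce
    moreover have "x' p \<in> {-1, 1}" if "p < k" for p
      using x' that by (auto simp: signs_def)
    ultimately show ?thesis
      by (auto simp: x_def signs_def)
  qed
  have "cut_value (Kedges k) (relabel m s a) x' = cut_value (Kedges k) (relabel m s a) (x \<circ> s)"
    unfolding cut_value_def by (intro sum.cong refl) (auto simp: relabel_def Kedges_def x_s)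
  also have "\<dots> = cut_value (Kedges n) a x"
    unfolding cut_value_def by (simp add: sum_Kedges_relabel)
  also have "\<dots> \<le> ip n (Kedges n) a"
    using \<open>x \<in> signs n\<close> by (rule cut_value_le_ip)
  finally show "cut_value (Kedges k) (relabel m s a) x' \<le> ip n (Kedges n) a" .
qed

lemma sdp_value_relabel:
  assumes u: "u \<in> unit_systems n" and "0 < k"
  obtains v where "v \<in> unit_systems k"
    and "(\<Sum>(i,j)\<in>Kedges n. a (i,j) * dot n (u i) (u j)) = sdp_value k (Kedges k) (relabel m s a) v"
proof -
  obtain V where V0: "\<And>p l. m \<le> l \<Longrightarrow> V p l = 0"
    and V: "\<And>p q. p < m \<Longrightarrow> q < m \<Longrightarrow> dot m (V p) (V q) = dot n (u (s p)) (u (s q))"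
    using gram_matrix_in_dimension[where m = m and N = n and U = "\<lambda>p. u (s p)"] by blast
  define v where "v p = (if p < m then V p else (\<lambda>l. if l = 0 then 1 else 0))" for p
  have v: "dot k (v p) (v q) = dot n (u (s p)) (u (s q))" if "p < m" "q < m" for p q
  proof -
    have "dot k (V p) (V q) = dot m (V p) (V q)"
      unfolding dot_def using V0 m_le by (intro sum.mono_neutral_right) auto
    then show ?thesis
      using that V by (simp add: v_def)
  qed
  have "v \<in> unit_systems k"
    unfolding unit_systems_iff
  proof (intro allI impI)
    fix p assume "p < k"
    show "dot k (v p) (v p) = 1"
    proof (cases "p < m")
      case True
      then have "s p < n"
        using bij_betw_apply[OF s_bij] S_sub by auto
      then show ?thesis
        using v[OF True True] u by (simp add: unit_systems_iff)
    next
      case False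
      then show ?thesis
        using \<open>0 < k\<close> by (simp add: v_def dot_def if_distrib[of "\<lambda>y. y * _"] cong: if_cong)
    qed
  qed
  moreover have "(\<Sum>(i,j)\<in>Kedges n. a (i,j) * dot n (u i) (u j)) = sdp_value k (Kedges k) (relabel m s a) v"
    unfolding sum_Kedges_relabel sdp_value_def
    by (intro sum.cong refl) (auto simp: relabel_def Kedges_def v)
  ultimately show ?thesis
    using that by blast
qed

end

lemma valid_ineq_gram_le:
  assumes sdp_le: "\<And>b. sdp k (Kedges k) b \<le> c * ip k (Kedges k) b" and "0 \<le> c" "0 < k"
    and valid: "valid_ineq n a \<alpha>" and supp: "card (support_nodes n a) \<le> k"
    and u: "u \<in> unit_systems n"
  shows "(\<Sum>(i,j)\<in>Kedges n. a (i,j) * dot n (u i) (u j)) \<le> c * \<alpha>"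
proof -
  define S where "S = support_nodes n a"
  have "finite S"
    unfolding S_def using support_nodes_subset finite_subset by blast
  then obtain s where s: "bij_betw s {..<card S} S" "strict_mono_on {..<card S} s"
    by (rule ex_bij_betw_strict_mono_card)
  have a_supp: "i \<in> S \<and> j \<in> S" if "(i,j) \<in> Kedges n" "a (i,j) \<noteq> 0" for i j
    using that unfolding S_def support_nodes_def by blast
  note relabelling = s support_nodes_subset[of n a, folded S_def] supp[folded S_def] a_supp
  obtain v where v: "v \<in> unit_systems k"
    and eq: "(\<Sum>(i,j)\<in>Kedges n. a (i,j) * dot n (u i) (u j)) = sdp_value k (Kedges k) (relabel (card S) s a) v"
    using sdp_value_relabel[where s = s and a = a, OF relabelling u \<open>0 < k\<close>] by blast
  have "sdp_value k (Kedges k) (relabel (card S) s a) v \<le> sdp k (Kedges k) (relabel (card S) s a)"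
    using v by (intro sdp_value_le_sdp) simp
  also have "\<dots> \<le> c * ip k (Kedges k) (relabel (card S) s a)"
    by (rule sdp_le)
  also have "\<dots> \<le> c * \<alpha>"
    using ip_relabel_le[where s = s and a = a, OF relabelling] ip_le_of_valid_ineq[OF valid] \<open>0 \<le> c\<close>
    by (intro mult_left_mono) auto
  finally show ?thesis
    using eq by simp
qed

section \<open>Graphs in \<open>\<G>\<^sub>k\<close>\<close>

lemma sdp_le_ip_of_in_Gk:
  assumes G: "in_Gk k n E" and "0 < c" "0 < k"
    and sdp_le: "\<And>b. sdp k (Kedges k) b \<le> c * ip k (Kedges k) b"
  shows "sdp n E w \<le> c * ip n E w"
proof (rule sdp_leI)
  fix u assume u: "u \<in> unit_systems n"
  have E: "E \<subseteq> Kedges n"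
    using G by (simp add: in_Gk_def is_graph_def)
  define z where "z e = (if e \<in> Kedges n then dot n (u (fst e)) (u (snd e)) / c else 0)" for e
  have "z \<in> Rk k n"
    unfolding Rk_def
  proof (intro CollectI conjI allI impI)
    show "z \<in> space_on (Kedges n)"
      by (simp add: space_on_def z_def)
    fix a \<alpha>
    assume "a \<in> space_on (Kedges n) \<and> valid_ineq n a \<alpha> \<and> card (support_nodes n a) \<le> k"
    then have "(\<Sum>(i,j)\<in>Kedges n. a (i,j) * dot n (u i) (u j)) \<le> c * \<alpha>"
      using valid_ineq_gram_le[OF sdp_le _ \<open>0 < k\<close> _ _ u] \<open>0 < c\<close> by simp
    then show "(\<Sum>e\<in>Kedges n. a e * z e) \<le> \<alpha>"
      using \<open>0 < c\<close> by (simp add: z_def case_prod_unfold sum_divide_distrib[symmetric] divide_le_eq mult.commute)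
  qed
  then have "proj E z \<in> CUT n E"
    using G by (auto simp: in_Gk_def RkG_def)
  then obtain y where y: "y \<in> CUTn n" and zy: "proj E z = proj E y"
    unfolding CUT_def by blast
  have "sdp_value n E w u = c * (\<Sum>e\<in>E. w e * z e)"
    using E \<open>0 < c\<close> by (auto simp: sdp_value_def z_def sum_distrib_left case_prod_unfold intro!: sum.cong)
  also have "(\<Sum>e\<in>E. w e * z e) = (\<Sum>e\<in>E. w e * y e)"
    using zy by (intro sum.cong refl) (metis proj_def)
  also have "c * \<dots> \<le> c * ip n E w"
    using CUTn_value_le_ip[OF E y] \<open>0 < c\<close> by simp
  finally show "sdp_value n E w u \<le> c * ip n E w" .
qed

lemma kappa_le_kappa_complete_of_in_Gk:
  assumes "2 \<le> k" and G: "in_Gk k n E"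
  shows "kappa n E \<le> kappa k (Kedges k)"
proof (cases "kappa k (Kedges k)")
  case (real K)
  have E: "E \<subseteq> Kedges n"
    using G by (simp add: in_Gk_def is_graph_def)
  have "0 \<le> K"
    using kappa_nonneg[of k "Kedges k"] real by simp
  have sdp_k: "sdp k (Kedges k) b \<le> K * ip k (Kedges k) b" for b
    using sdp_le_kappa_ip[OF _ Kedges_nonempty[OF \<open>2 \<le> k\<close>] real] by simp
  have "sdp n E w \<le> K * ip n E w" for w
  proof (rule field_le_epsilon)
    fix e :: real assume "0 < e"
    define t where "t = e / (ip n E w + 1)"
    have "0 \<le> ip n E w"
      using E by (rule ip_nonneg)
    then have "0 < t" "t * ip n E w \<le> e"
      using \<open>0 < e\<close> by (simp_all add: t_def field_simps)
    have "sdp k (Kedges k) b \<le> (K + t) * ip k (Kedges k) b" for b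
    proof -
      have "0 \<le> t * ip k (Kedges k) b"
        using ip_nonneg[of "Kedges k" k b] \<open>0 < t\<close> by simp
      then show ?thesis
        using sdp_k[of b] unfolding distrib_right by linarith
    qed
    then have "sdp n E w \<le> (K + t) * ip n E w"
      using sdp_le_ip_of_in_Gk[OF G] \<open>0 \<le> K\<close> \<open>0 < t\<close> \<open>2 \<le> k\<close> by simp
    then show "sdp n E w \<le> K * ip n E w + e"
      using \<open>t * ip n E w \<le> e\<close> by (simp add: distrib_right)
  qed
  then show ?thesis
    using kappa_le_ereal[OF E \<open>0 \<le> K\<close>] real by simp
next
  case MInf
  then show ?thesis
    using kappa_nonneg[of k "Kedges k"] by simp
qed simp

theorem mainTheorem9:
  fixes k :: nat
  assumes "k \<ge> 2"
  shows "(\<forall>n E. in_Gk k n E \<longrightarrow> kappa n E \<le> kappa k (Kedges k)) \<and> in_Gk k k (Kedges k)"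
  using kappa_le_kappa_complete_of_in_Gk[OF assms] in_Gk_complete by blast

end
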